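(* There exists a map of multipointed $d$-spaces $f:X\to Y$ whose underlying continuous map $f:|X|\to|Y|$ is a homeomorphism but such that $\vec{\mathrm{Sp}}(f):\vec{\mathrm{Sp}}(X)\to\vec{\mathrm{Sp}}(Y)$ is not an isomorphism of directed spaces.
   Context: $\mathcal{M}(1,1)$: non-decreasing surjective continuous maps $[0,1]\to[0,1]$; $\mathcal{I}(1)$: non-decreasing continuous maps $[0,1]\to[0,1]$; $\mu_\ell(t)=t/\ell$. A multipointed $d$-space is $(|X|,X^0,\mathbb{P}^{\mathrm{top}}X)$: a space, a set of states $X^0\subset|X|$, a set of continuous maps $[0,1]\to|X|$ (execution paths) with endpoints in $X^0$, closed under precomposition by $\mathcal{M}(1,1)$ and normalized composition $\gamma_1*_N\gamma_2$ ($\gamma_1(2t)$ on $[0,1/2]$, $\gamma_2(2t-1)$ on $[1/2,1]$); maps are continuous maps preserving states and execution paths. A directed space is $(|Y|,d(Y))$ with $d(Y)$ a set of paths $[0,1]\to|Y|$ containing constants, closed under normalized composition and precomposition by $\mathcal{I}(1)$; morphisms preserve directed paths. $\vec{\mathrm{Sp}}(X)$ is the directed space on $|X|$ whose directed paths are the constant paths and the Moore concatenations $(\gamma_1\phi_1\mu_{\ell_1})*\dots*(\gamma_n\phi_n\mu_{\ell_n})$ with $\ell_i>0$, $\sum\ell_i=1$, $\gamma_i$ execution paths, $\phi_i\in\mathcal{I}(1)$; $\vec{\mathrm{Sp}}(f)$ has the same underlying map as $f$. *)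

theory Defs
  imports "HOL-Analysis.Analysis"
begin

text \<open>Paths are functions real => 'a; only their values on [0,1] are relevant.
  Sets of paths are required to be closed under changing values outside [0,1],
  so that they are in effect sets of maps [0,1] -> |X|.\<close>

definition path_ext_closed :: "(real \<Rightarrow> 'a) set \<Rightarrow> bool" where
  "path_ext_closed P \<longleftrightarrow>
     (\<forall>\<gamma>\<in>P. \<forall>\<delta>. (\<forall>t\<in>{0..1}. \<delta> t = \<gamma> t) \<longrightarrow> \<delta> \<in> P)"

definition M11 :: "(real \<Rightarrow> real) set" where
  "M11 = {\<phi>. continuous_on {0..1} \<phi> \<and> mono_on {0..1} \<phi> \<and> \<phi> ` {0..1} = {0..1}}"

definition I1 :: "(real \<Rightarrow> real) set" where
  "I1 = {\<phi>. continuous_on {0..1} \<phi> \<and> mono_on {0..1} \<phi> \<and> \<phi> ` {0..1} \<subseteq> {0..1}}"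

definition ncomp :: "(real \<Rightarrow> 'a) \<Rightarrow> (real \<Rightarrow> 'a) \<Rightarrow> real \<Rightarrow> 'a" where
  "ncomp \<gamma>1 \<gamma>2 = (\<lambda>t. if t \<le> 1/2 then \<gamma>1 (2*t) else \<gamma>2 (2*t - 1))"

record 'a mdspace =
  mtop :: "'a topology"
  mstates :: "'a set"
  mpaths :: "(real \<Rightarrow> 'a) set"

definition is_mdspace :: "'a mdspace \<Rightarrow> bool" where
  "is_mdspace X \<longleftrightarrow>
     mstates X \<subseteq> topspace (mtop X) \<and>
     (\<forall>\<gamma>\<in>mpaths X. pathin (mtop X) \<gamma> \<and> \<gamma> 0 \<in> mstates X \<and> \<gamma> 1 \<in> mstates X) \<and>
     (\<forall>\<gamma>\<in>mpaths X. \<forall>\<phi>\<in>M11. \<gamma> \<circ> \<phi> \<in> mpaths X) \<and>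
     (\<forall>\<gamma>1\<in>mpaths X. \<forall>\<gamma>2\<in>mpaths X. \<gamma>1 1 = \<gamma>2 0 \<longrightarrow> ncomp \<gamma>1 \<gamma>2 \<in> mpaths X) \<and>
     path_ext_closed (mpaths X)"

definition mds_map :: "'a mdspace \<Rightarrow> 'b mdspace \<Rightarrow> ('a \<Rightarrow> 'b) \<Rightarrow> bool" where
  "mds_map X Y f \<longleftrightarrow>
     continuous_map (mtop X) (mtop Y) f \<and>
     f ` mstates X \<subseteq> mstates Y \<and>
     (\<forall>\<gamma>\<in>mpaths X. f \<circ> \<gamma> \<in> mpaths Y)"

record 'a dspace =
  dtop :: "'a topology"
  dpaths :: "(real \<Rightarrow> 'a) set"

definition is_dspace :: "'a dspace \<Rightarrow> bool" where
  "is_dspace Y \<longleftrightarrow>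
     (\<forall>\<gamma>\<in>dpaths Y. pathin (dtop Y) \<gamma>) \<and>
     (\<forall>x\<in>topspace (dtop Y). (\<lambda>_. x) \<in> dpaths Y) \<and>
     (\<forall>\<gamma>1\<in>dpaths Y. \<forall>\<gamma>2\<in>dpaths Y. \<gamma>1 1 = \<gamma>2 0 \<longrightarrow> ncomp \<gamma>1 \<gamma>2 \<in> dpaths Y) \<and>
     (\<forall>\<gamma>\<in>dpaths Y. \<forall>\<phi>\<in>I1. \<gamma> \<circ> \<phi> \<in> dpaths Y) \<and>
     path_ext_closed (dpaths Y)"

definition ds_map :: "'a dspace \<Rightarrow> 'b dspace \<Rightarrow> ('a \<Rightarrow> 'b) \<Rightarrow> bool" where
  "ds_map X Y f \<longleftrightarrow>
     continuous_map (dtop X) (dtop Y) f \<and> (\<forall>\<gamma>\<in>dpaths X. f \<circ> \<gamma> \<in> dpaths Y)"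

definition ds_iso :: "'a dspace \<Rightarrow> 'b dspace \<Rightarrow> ('a \<Rightarrow> 'b) \<Rightarrow> bool" where
  "ds_iso X Y f \<longleftrightarrow>
     ds_map X Y f \<and>
     (\<exists>g. ds_map Y X g \<and> (\<forall>x\<in>topspace (dtop X). g (f x) = x) \<and>
          (\<forall>y\<in>topspace (dtop Y). f (g y) = y))"

text \<open>Moore concatenation of a nonempty list of Moore paths (delta_i, l_i), where
  delta_i is a path [0,1] -> |X| and the i-th piece is delta_i o mu_{l_i} on [0,l_i].\<close>
fun moore_cat :: "((real \<Rightarrow> 'a) \<times> real) list \<Rightarrow> real \<Rightarrow> 'a" where
  "moore_cat [] t = undefined"
| "moore_cat [(\<delta>, l)] t = \<delta> (t / l)"
| "moore_cat ((\<delta>, l) # p # ps) t =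
     (if t \<le> l then \<delta> (t / l) else moore_cat (p # ps) (t - l))"

text \<open>Sp(X): the directed space on |X| whose directed paths are the constant paths and the
  Moore concatenations (gamma_1 phi_1 mu_l1) * ... * (gamma_n phi_n mu_ln), l_i > 0, sum l_i = 1,
  gamma_i execution paths, phi_i in I(1) (consecutive pieces must match at their endpoints).\<close>
definition Sp :: "'a mdspace \<Rightarrow> 'a dspace" where
  "Sp X = \<lparr> dtop = mtop X,
     dpaths =
       {\<gamma>. \<exists>x\<in>topspace (mtop X). \<forall>t\<in>{0..1}. \<gamma> t = x} \<union>
       {\<gamma>. \<exists>ps :: ((real \<Rightarrow> 'a) \<times> (real \<Rightarrow> real) \<times> real) list.
             ps \<noteq> [] \<and>
             (\<forall>(g, \<phi>, l) \<in> set ps. g \<in> mpaths X \<and> \<phi> \<in> I1 \<and> l > 0) \<and>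
             sum_list (map (\<lambda>(g, \<phi>, l). l) ps) = 1 \<and>
             (\<forall>i. Suc i < length ps \<longrightarrow>
                 (case ps ! i of (g, \<phi>, l) \<Rightarrow> g (\<phi> 1)) =
                 (case ps ! Suc i of (g, \<phi>, l) \<Rightarrow> g (\<phi> 0))) \<and>
             (\<forall>t\<in>{0..1}. \<gamma> t = moore_cat (map (\<lambda>(g, \<phi>, l). (g \<circ> \<phi>, l)) ps) t)} \<rparr>"

end

theory Submission
  imports Defs
begin

text \<open>The functor Sp only sees execution paths, not the topology. Take the real line twice:
  X with no execution paths at all, Y with every continuous path as an execution path. The
  identity X \<rightarrow> Y is a map of multipointed d-spaces and a homeomorphism, but the identity
  path [0,1] \<rightarrow> \<real> is directed in Sp(Y), whereas Sp(X) only has constant directed paths.\<close>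

definition pathless_mdspace :: "'a topology \<Rightarrow> 'a mdspace" where
  "pathless_mdspace T = \<lparr> mtop = T, mstates = {}, mpaths = {} \<rparr>"

definition all_paths_mdspace :: "'a::topological_space mdspace" where
  "all_paths_mdspace = \<lparr> mtop = euclidean, mstates = UNIV, mpaths = {\<gamma>. path \<gamma>} \<rparr>"

lemma is_mdspace_pathless_mdspace: "is_mdspace (pathless_mdspace T)"
  by (simp add: is_mdspace_def pathless_mdspace_def path_ext_closed_def)

lemma pathin_euclidean_iff: "pathin euclidean g \<longleftrightarrow> path g"
  using pathin_canon_iff [of UNIV g] by simp

lemma path_compose_M11:
  assumes "path \<gamma>" and "\<phi> \<in> M11"
  shows "path (\<gamma> \<circ> \<phi>)"
proof -
  have "continuous_on {0..1} \<phi>" "\<phi> ` {0..1} = {0..1}"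
    using assms(2) by (auto simp: M11_def)
  with assms(1) show ?thesis
    unfolding path_def by (metis continuous_on_compose order_refl)
qed

lemma ncomp_eq_joinpaths: "ncomp \<gamma>1 \<gamma>2 = \<gamma>1 +++ \<gamma>2"
  by (simp add: ncomp_def joinpaths_def fun_eq_iff)

lemma path_ext_closed_paths: "path_ext_closed {\<gamma>. path \<gamma>}"
  unfolding path_ext_closed_def path_def by (metis continuous_on_cong mem_Collect_eq)

lemma is_mdspace_all_paths_mdspace: "is_mdspace all_paths_mdspace"
  unfolding is_mdspace_def all_paths_mdspace_def
  using path_compose_M11 path_ext_closed_paths
  by (auto simp: pathin_euclidean_iff ncomp_eq_joinpaths pathfinish_def pathstart_def)

lemma dpaths_Sp_no_mpaths:
  assumes "mpaths X = {}"
  shows "dpaths (Sp X) = {\<gamma>. \<exists>x\<in>topspace (mtop X). \<forall>t\<in>{0..1}. \<gamma> t = x}"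
proof -
  have "ps = []" if "\<forall>(g, \<phi>, l) \<in> set ps. g \<in> mpaths X \<and> \<phi> \<in> I1 \<and> l > 0"
    for ps :: "((real \<Rightarrow> 'a) \<times> (real \<Rightarrow> real) \<times> real) list"
    using that assms by (cases ps) auto
  then show ?thesis
    unfolding Sp_def by auto
qed

lemma mpaths_subset_dpaths_Sp: "mpaths X \<subseteq> dpaths (Sp X)"
proof
  fix \<gamma> assume "\<gamma> \<in> mpaths X"
  moreover have "id \<in> I1"
    by (simp add: I1_def mono_on_def)
  ultimately show "\<gamma> \<in> dpaths (Sp X)"
    unfolding Sp_def by (auto intro!: exI [of _ "[(\<gamma>, id, 1)]"])
qed

lemma dpaths_subset_if_ds_iso_id:
  assumes "ds_iso S T id" and "topspace (dtop T) = UNIV"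
  shows "dpaths T \<subseteq> dpaths S"
proof -
  from assms(1) obtain g where g: "ds_map T S g" and "\<forall>y\<in>topspace (dtop T). g y = y"
    unfolding ds_iso_def by auto
  with assms(2) have "g = id"
    by auto
  with g show ?thesis
    by (auto simp: ds_map_def)
qed

theorem proposition9p2:
  shows "\<exists>(X :: real mdspace) (Y :: real mdspace) (f :: real \<Rightarrow> real).
           is_mdspace X \<and> is_mdspace Y \<and> mds_map X Y f \<and>
           homeomorphic_map (mtop X) (mtop Y) f \<and>
           \<not> ds_iso (Sp X) (Sp Y) f"
proof (intro exI conjI)
  let ?X = "pathless_mdspace euclideanreal" and ?Y = "all_paths_mdspace :: real mdspace"
  show "is_mdspace ?X" "is_mdspace ?Y"
    by (fact is_mdspace_pathless_mdspace is_mdspace_all_paths_mdspace)+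
  show "mds_map ?X ?Y id" "homeomorphic_map (mtop ?X) (mtop ?Y) id"
    by (simp_all add: mds_map_def pathless_mdspace_def all_paths_mdspace_def)
  show "\<not> ds_iso (Sp ?X) (Sp ?Y) id"
  proof
    assume "ds_iso (Sp ?X) (Sp ?Y) id"
    then have "dpaths (Sp ?Y) \<subseteq> dpaths (Sp ?X)"
      by (rule dpaths_subset_if_ds_iso_id) (simp add: Sp_def all_paths_mdspace_def)
    moreover have "id \<in> dpaths (Sp ?Y)"
      using mpaths_subset_dpaths_Sp by (force simp: all_paths_mdspace_def path_def)
    ultimately have "\<exists>x::real. \<forall>t\<in>{0..1}. t = x"
      by (force simp: dpaths_Sp_no_mpaths pathless_mdspace_def)
    then show False
      by (metis atLeastAtMost_iff order_refl zero_neq_one zero_le_one)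
  qed
qed

end
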